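(* Let $f:\mathbb{R}^n\times\mathbb{R}^m\to\mathbb{R}^n$ be a polynomial map and let $\boldsymbol\psi:\mathbb{R}^n\to\mathbb{R}^m$ be a ReLU neural network $\boldsymbol\psi(x) = W_N\rho(W_{N-1}\cdots\rho(W_2\rho(W_1x+b_1)+b_2)\cdots+b_{N-1})+b_N$, where $\rho(z)=\max(z,0)$ is applied componentwise, modeled semialgebraically as follows: the lifting variable is $\lambda=(\lambda_1,\dots,\lambda_{N-1})$ (the outputs of the hidden layers), and the constraints $g(x,u,\lambda)\ge0$, $h(x,u,\lambda)=0$ consist of, with $z_1 = W_1x+b_1$ and $z_i = W_i\lambda_{i-1}+b_i$ for $2\le i\le N-1$: $\lambda_i\ge z_i$, $\lambda_i\ge 0$, $\lambda_i\odot(\lambda_i - z_i)=0$ for $i=1,\dots,N-1$ (componentwise, $\odot$ the componentwise product), and $u = W_N\lambda_{N-1}+b_N$. Then the function $x\mapsto \inf\{\|u\|_2+\|\lambda\|_2 \mid g(x,u,\lambda)\ge0,\ h(x,u,\lambda)=0\}$ is bounded on some neighborhood of the origin. Moreover, with \[ \mathbf{K} = \{(x,u,\lambda,x^+,u^+,\lambda^+) \mid x^+ = f(x,u),\ g(x,u,\lambda)\ge 0,\ h(x,u,\lambda)=0,\ g(x^+,u^+,\lambda^+)\ge 0,\ h(x^+,u^+,\lambda^+)=0\}, \] if a continuous function $V$ of $(x,u,\lambda)$ satisfies $V(x^+,u^+,\lambda^+) - V(x,u,\lambda)\le -\|x\|_2^2$ and $V(x,u,\lambda)\ge 0$ for all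 $(x,u,\lambda,x^+,u^+,\lambda^+)\in\mathbf{K}$, then the closed-loop system $x_{k+1}=f(x_k,\boldsymbol\psi(x_k))$ is globally asymptotically stable.
   Context: The closed-loop system is globally asymptotically stable if (i) for all initial conditions $x_0$, $\lim_{k\to\infty}x_k=0$, and (ii) for every $\epsilon>0$ there exists $\delta>0$ such that $\|x_0\|_2\le\delta$ implies $\|x_k\|_2\le\epsilon$ for all $k$. *)

theory Defs
  imports "HOL-Analysis.Analysis"
begin

inductive poly_xu :: "(real^'n \<Rightarrow> real^'m \<Rightarrow> real) \<Rightarrow> bool" where
  const: "poly_xu (\<lambda>x u. c)"
| var_x: "poly_xu (\<lambda>x u. x $ j)"
| var_u: "poly_xu (\<lambda>x u. u $ k)"
| add: "poly_xu p \<Longrightarrow> poly_xu q \<Longrightarrow> poly_xu (\<lambda>x u. p x u + q x u)"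
| mult: "poly_xu p \<Longrightarrow> poly_xu q \<Longrightarrow> poly_xu (\<lambda>x u. p x u * q x u)"

definition polynomial_map :: "(real^'n \<Rightarrow> real^'m \<Rightarrow> real^'n) \<Rightarrow> bool" where
  "polynomial_map f \<longleftrightarrow> (\<forall>i. poly_xu (\<lambda>x u. f x u $ i))"

text \<open>A ReLU network R^n -> R^m with N = depth layers (N-1 hidden layers).
  Hidden layer i (1 <= i <= N-1) has width (width i); its components are indexed by j < width i.
  W_in j k : entry (j,k) of W_1;  W_hid i j k : entry (j,k) of W_i for 2 <= i <= N-1;
  W_out r k : entry (r,k) of W_N;  bias i j : component j of b_i (1 <= i <= N-1);
  b_out r : component r of b_N.\<close>
record ('n, 'm) relu_net =
  depth :: nat
  width :: "nat \<Rightarrow> nat"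
  W_in :: "nat \<Rightarrow> 'n \<Rightarrow> real"
  W_hid :: "nat \<Rightarrow> nat \<Rightarrow> nat \<Rightarrow> real"
  W_out :: "'m \<Rightarrow> nat \<Rightarrow> real"
  bias :: "nat \<Rightarrow> nat \<Rightarrow> real"
  b_out :: "'m \<Rightarrow> real"

definition pre_act :: "('n::finite, 'm) relu_net \<Rightarrow> real^'n \<Rightarrow> nat \<Rightarrow> (nat \<Rightarrow> real) \<Rightarrow> nat \<Rightarrow> real" where
  "pre_act P x i prev j =
     (if i = 1 then (\<Sum>k\<in>UNIV. W_in P j k * x $ k) + bias P 1 j
      else (\<Sum>k<width P (i - 1). W_hid P i j k * prev k) + bias P i j)"

definition relu :: "real \<Rightarrow> real" where
  "relu z = max z 0"

fun hidden :: "('n::finite, 'm) relu_net \<Rightarrow> real^'n \<Rightarrow> nat \<Rightarrow> nat \<Rightarrow> real" where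
  "hidden P x 0 = (\<lambda>j. 0)"
| "hidden P x (Suc i) =
     (\<lambda>j. if j < width P (Suc i) then relu (pre_act P x (Suc i) (hidden P x i) j) else 0)"

definition out_layer :: "('n, 'm::finite) relu_net \<Rightarrow> (nat \<Rightarrow> real) \<Rightarrow> real^'m" where
  "out_layer P l = (\<chi> r. (\<Sum>k<width P (depth P - 1). W_out P r k * l k) + b_out P r)"

definition psi :: "('n::finite, 'm::finite) relu_net \<Rightarrow> real^'n \<Rightarrow> real^'m" where
  "psi P x = out_layer P (hidden P x (depth P - 1))"

text \<open>The lifting variable lambda = (lambda_1,...,lambda_{N-1}) is represented as
  l :: nat => nat => real, l i j = component j of lambda_i; it lives in the finite-dimensional
  space of such l vanishing outside 1 <= i <= N-1, j < width i.\<close>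
definition lam_space :: "('n, 'm) relu_net \<Rightarrow> (nat \<Rightarrow> nat \<Rightarrow> real) set" where
  "lam_space P = {l. \<forall>i j. (i < 1 \<or> i > depth P - 1 \<or> j \<ge> width P i) \<longrightarrow> l i j = 0}"

definition lam_norm :: "('n, 'm) relu_net \<Rightarrow> (nat \<Rightarrow> nat \<Rightarrow> real) \<Rightarrow> real" where
  "lam_norm P l = sqrt (\<Sum>i\<in>{1..depth P - 1}. \<Sum>j<width P i. (l i j)\<^sup>2)"

definition feasible :: "('n::finite, 'm::finite) relu_net \<Rightarrow> real^'n \<Rightarrow> real^'m \<Rightarrow> (nat \<Rightarrow> nat \<Rightarrow> real) \<Rightarrow> bool" where
  "feasible P x u l \<longleftrightarrow>
     l \<in> lam_space P \<and>
     (\<forall>i\<in>{1..depth P - 1}. \<forall>j < width P i.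
        l i j \<ge> pre_act P x i (l (i - 1)) j \<and>
        l i j \<ge> 0 \<and>
        l i j * (l i j - pre_act P x i (l (i - 1)) j) = 0) \<and>
     u = out_layer P (l (depth P - 1))"

definition glob_asymp_stable :: "(real^'n \<Rightarrow> real^'n) \<Rightarrow> bool" where
  "glob_asymp_stable F \<longleftrightarrow>
     (\<forall>x0. (\<lambda>k. (F ^^ k) x0) \<longlonglongrightarrow> 0) \<and>
     (\<forall>\<epsilon>>0. \<exists>\<delta>>0. \<forall>x0. norm x0 \<le> \<delta> \<longrightarrow> (\<forall>k. norm ((F ^^ k) x0) \<le> \<epsilon>))"

end

theory Submission
  imports Defs
begin

text \<open>The forward evaluation of the network gives a feasible lifted point
  \<open>(x, \<psi>(x), \<lambda>(x))\<close> depending continuously on \<open>x\<close>. Its cost bounds the infimum near the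
  origin, and \<open>G(x) = V(x, \<psi>(x), \<lambda>(x))\<close> is a continuous Lyapunov function for the
  closed-loop map \<open>F x = f(x, \<psi>(x))\<close>: \<open>G \<ge> 0\<close> and \<open>G(F x) \<le> G x - \<parallel>x\<parallel>\<^sup>2\<close>.
  Telescoping makes \<open>\<Sum>\<^sub>k \<parallel>x\<^sub>k\<parallel>\<^sup>2 \<le> G(x\<^sub>0)\<close> finite, so \<open>x\<^sub>k \<rightarrow> 0\<close>; then \<open>G(x\<^sub>k)\<close> decreases to \<open>G(0)\<close>, whence \<open>\<parallel>x\<^sub>k\<parallel>\<^sup>2 \<le> G(x\<^sub>0) - G(0)\<close>, which is
  small for small \<open>x\<^sub>0\<close> by continuity of \<open>G\<close> at \<open>0\<close>.\<close>

lemma lyapunov_iterates_tendsto_zero: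
  fixes F :: "'a::real_normed_vector \<Rightarrow> 'a"
  assumes descent: "\<And>x. G (F x) \<le> G x - (norm x)\<^sup>2"
    and nonneg: "\<And>x. 0 \<le> G x"
  shows "(\<lambda>k. (F ^^ k) x0) \<longlonglongrightarrow> 0"
proof -
  define X where "X k = (F ^^ k) x0" for k
  have step: "(norm (X k))\<^sup>2 \<le> G (X k) - G (X (Suc k))" for k
    using descent[of "X k"] by (simp add: X_def)
  have partial_sums: "(\<Sum>k<n. (norm (X k))\<^sup>2) \<le> G x0" for n
  proof -
    have "(\<Sum>k<n. (norm (X k))\<^sup>2) \<le> (\<Sum>k<n. G (X k) - G (X (Suc k)))"
      by (intro sum_mono step)
    also have "\<dots> = G x0 - G (X n)"
      using sum_lessThan_telescope'[of "\<lambda>k. G (X k)" n] by (simp add: X_def)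
    also have "\<dots> \<le> G x0"
      using nonneg by simp
    finally show ?thesis .
  qed
  have "summable (\<lambda>k. (norm (X k))\<^sup>2)"
    by (rule summableI_nonneg_bounded[OF _ partial_sums]) simp
  then have "(\<lambda>k. (norm (X k))\<^sup>2) \<longlonglongrightarrow> 0"
    by (rule summable_LIMSEQ_zero)
  then have "(\<lambda>k. sqrt ((norm (X k))\<^sup>2)) \<longlonglongrightarrow> sqrt 0"
    by (rule tendsto_real_sqrt)
  then show ?thesis
    by (simp add: X_def tendsto_norm_zero_iff)
qed

lemma lyapunov_iterates_norm_bound:
  fixes F :: "'a::real_normed_vector \<Rightarrow> 'a"
  assumes descent: "\<And>x. G (F x) \<le> G x - (norm x)\<^sup>2"
    and nonneg: "\<And>x. 0 \<le> G x"
    and cont: "isCont G 0"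
  shows "(norm ((F ^^ k) x0))\<^sup>2 \<le> G x0 - G 0"
proof -
  define X where "X k = (F ^^ k) x0" for k
  have step: "(norm (X k))\<^sup>2 \<le> G (X k) - G (X (Suc k))" for k
    using descent[of "X k"] by (simp add: X_def)
  have dec: "decseq (\<lambda>k. G (X k))"
    by (rule decseq_SucI) (use step in \<open>smt (verit) zero_le_power2\<close>)
  have "(\<lambda>k. G (X k)) \<longlonglongrightarrow> G 0"
    using isCont_tendsto_compose[OF cont lyapunov_iterates_tendsto_zero[OF descent nonneg]]
    by (simp add: X_def)
  then have "G 0 \<le> G (X (Suc k))"
    by (rule decseq_ge[OF dec])
  moreover have "G (X k) \<le> G (X 0)"
    using decseqD[OF dec] by simp
  ultimately show ?thesis
    using step[of k] by (simp add: X_def)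
qed

lemma glob_asymp_stable_if_lyapunov:
  fixes F :: "real^'n \<Rightarrow> real^'n"
  assumes descent: "\<And>x. G (F x) \<le> G x - (norm x)\<^sup>2"
    and nonneg: "\<And>x. 0 \<le> G x"
    and cont: "isCont G 0"
  shows "glob_asymp_stable F"
  unfolding glob_asymp_stable_def
proof (intro conjI allI impI)
  show "(\<lambda>k. (F ^^ k) x0) \<longlonglongrightarrow> 0" for x0
    using lyapunov_iterates_tendsto_zero[OF descent nonneg] .
next
  fix \<epsilon> :: real
  assume "\<epsilon> > 0"
  then obtain \<delta> where "\<delta> > 0" and \<delta>: "\<And>x. dist x 0 < \<delta> \<Longrightarrow> dist (G x) (G 0) < \<epsilon>\<^sup>2"
    using cont unfolding continuous_at_eps_delta by (metis zero_less_power)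
  have "norm ((F ^^ k) x0) \<le> \<epsilon>" if "norm x0 \<le> \<delta> / 2" for x0 k
  proof -
    have "(norm ((F ^^ k) x0))\<^sup>2 \<le> G x0 - G 0"
      by (rule lyapunov_iterates_norm_bound[OF descent nonneg cont])
    also have "\<dots> < \<epsilon>\<^sup>2"
      using \<delta>[of x0] that \<open>\<delta> > 0\<close> by (simp add: dist_real_def)
    finally show ?thesis
      using \<open>\<epsilon> > 0\<close> by (auto dest: power_less_imp_less_base)
  qed
  then show "\<exists>\<delta>>0. \<forall>x0. norm x0 \<le> \<delta> \<longrightarrow> (\<forall>k. norm ((F ^^ k) x0) \<le> \<epsilon>)"
    using \<open>\<delta> > 0\<close> by (intro exI[of _ "\<delta> / 2"]) auto
qed

definition network_lift :: "('n::finite, 'm::finite) relu_net \<Rightarrow> real^'n \<Rightarrow> nat \<Rightarrow> nat \<Rightarrow> real" where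
  "network_lift P x = (\<lambda>i j. if 1 \<le> i \<and> i \<le> depth P - 1 then hidden P x i j else 0)"

lemma continuous_on_hidden: "continuous_on UNIV (\<lambda>x. hidden P x i j)"
proof (induction i arbitrary: j)
  case 0
  then show ?case by simp
next
  case (Suc i)
  have "continuous_on UNIV (\<lambda>x. pre_act P x (Suc i) (hidden P x i) j)"
  proof (cases "Suc i = 1")
    case True
    then show ?thesis unfolding pre_act_def by (simp add: continuous_intros)
  next
    case False
    then show ?thesis unfolding pre_act_def
      by (simp del: hidden.simps) (intro continuous_intros Suc.IH)
  qed
  then show ?case
    unfolding relu_def hidden.simps(2)
    by (cases "j < width P (Suc i)") (simp_all add: continuous_intros del: hidden.simps)
qed

lemma continuous_on_network_lift_component [continuous_intros]:
  "continuous_on UNIV (\<lambda>x. network_lift P x i j)"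
proof (cases "1 \<le> i \<and> i \<le> depth P - 1")
  case True
  then show ?thesis by (simp add: network_lift_def continuous_on_hidden)
next
  case False
  then have "(\<lambda>x. network_lift P x i j) = (\<lambda>x. 0)"
    by (auto simp: network_lift_def)
  then show ?thesis by (simp only: continuous_on_const)
qed

lemma continuous_on_network_lift: "continuous_on UNIV (network_lift P)"
  by (intro continuous_on_coordinatewise_then_product continuous_on_network_lift_component)

lemma continuous_on_psi: "continuous_on UNIV (psi P)"
  unfolding psi_def out_layer_def
  by (intro continuous_on_vec_lambda continuous_intros continuous_on_hidden)

lemma network_lift_in_lam_space: "network_lift P x \<in> lam_space P"
  unfolding lam_space_def network_lift_def
proof (intro CollectI allI impI)
  fix i j
  assume outside: "i < 1 \<or> depth P - 1 < i \<or> width P i \<le> j"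
  show "(if 1 \<le> i \<and> i \<le> depth P - 1 then hidden P x i j else 0) = 0"
  proof (cases i)
    case (Suc i')
    with outside show ?thesis by auto
  qed simp
qed

lemma feasible_network_lift:
  assumes "depth P \<ge> 2"
  shows "feasible P x (psi P x) (network_lift P x)"
proof -
  have previous: "pre_act P x i (network_lift P x (i - 1)) = pre_act P x i (hidden P x (i - 1))"
    if "i \<in> {1..depth P - 1}" for i
  proof (cases "i = 1")
    case False
    with that have "network_lift P x (i - 1) = hidden P x (i - 1)"
      by (auto simp: network_lift_def fun_eq_iff)
    then show ?thesis by simp
  qed (simp add: pre_act_def fun_eq_iff)
  have current: "network_lift P x i j = relu (pre_act P x i (hidden P x (i - 1)) j)"
    if "i \<in> {1..depth P - 1}" "j < width P i" for i j
    using that by (cases i) (auto simp: network_lift_def)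
  have "network_lift P x (depth P - 1) = hidden P x (depth P - 1)"
    using assms by (auto simp: network_lift_def)
  moreover have "relu z \<ge> z \<and> relu z \<ge> 0 \<and> relu z * (relu z - z) = 0" for z
    by (auto simp: relu_def)
  ultimately show ?thesis
    unfolding feasible_def psi_def using network_lift_in_lam_space previous current by simp
qed

lemma lam_norm_nonneg: "0 \<le> lam_norm P l"
  unfolding lam_norm_def by (simp add: sum_nonneg)

lemma bounded_inf_lift_cost:
  assumes "depth P \<ge> 2" and "bounded S"
  shows "bounded ((\<lambda>x. Inf {norm u + lam_norm P l | u l. feasible P x u l}) ` S)"
proof -
  define H where "H = (\<lambda>x. norm (psi P x) + lam_norm P (network_lift P x))"
  have "continuous_on UNIV H"
    unfolding H_def lam_norm_def
    by (intro continuous_on_add continuous_on_norm continuous_on_psi continuous_on_real_sqrt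
        continuous_on_sum continuous_on_power continuous_on_network_lift_component)
  then have "compact (H ` closure S)"
    using \<open>bounded S\<close> by (simp add: compact_continuous_image continuous_on_subset)
  then have "bounded (H ` S)"
    by (rule bounded_closure_image[OF compact_imp_bounded])
  then obtain B where B: "\<And>x. x \<in> S \<Longrightarrow> H x \<le> B"
    unfolding bounded_real by (meson abs_le_D1 imageI)
  have "\<bar>Inf {norm u + lam_norm P l | u l. feasible P x u l}\<bar> \<le> B" if "x \<in> S" for x
  proof -
    let ?C = "{norm u + lam_norm P l | u l. feasible P x u l}"
    have lift: "H x \<in> ?C"
      unfolding H_def using feasible_network_lift[OF assms(1)] by blast
    have nonneg: "0 \<le> c" if "c \<in> ?C" for c
      using that by (auto intro: add_nonneg_nonneg lam_norm_nonneg)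
    have "0 \<le> Inf ?C"
      using lift nonneg by (intro cInf_greatest) auto
    moreover have "Inf ?C \<le> H x"
      using lift nonneg by (intro cInf_lower bdd_belowI[of _ 0]) auto
    ultimately show ?thesis
      using B[OF that] by linarith
  qed
  then show ?thesis
    unfolding bounded_real by (intro exI[of _ B]) auto
qed

lemma glob_asymp_stable_if_lifted_lyapunov:
  fixes f :: "real^'n \<Rightarrow> real^'m \<Rightarrow> real^'n"
    and P :: "('n, 'm) relu_net"
  assumes "depth P \<ge> 2"
    and V_cont: "continuous_on (UNIV \<times> UNIV \<times> lam_space P) (\<lambda>(x, u, l). V x u l)"
    and V_lyap: "\<And>x u l u' l'. feasible P x u l \<Longrightarrow> feasible P (f x u) u' l' \<Longrightarrow>
                   V (f x u) u' l' - V x u l \<le> - (norm x)\<^sup>2 \<and> V x u l \<ge> 0"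
  shows "glob_asymp_stable (\<lambda>x. f x (psi P x))"
proof (rule glob_asymp_stable_if_lyapunov)
  define G where "G = (\<lambda>x. V x (psi P x) (network_lift P x))"
  have "continuous_on UNIV (\<lambda>x. (\<lambda>(x, u, l). V x u l) (x, psi P x, network_lift P x))"
    by (rule continuous_on_compose2[OF V_cont continuous_on_Pair[OF continuous_on_id
          continuous_on_Pair[OF continuous_on_psi continuous_on_network_lift]]])
      (auto simp: network_lift_in_lam_space)
  then show "isCont G 0"
    by (simp add: G_def continuous_on_eq_continuous_at)
  have "feasible P y (psi P y) (network_lift P y)" for y
    using feasible_network_lift[OF assms(1)] .
  from V_lyap[OF this this]
  show "G (f x (psi P x)) \<le> G x - (norm x)\<^sup>2" and "0 \<le> G x" for x
    unfolding G_def by (smt (verit))+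
qed

theorem corollary1:
  fixes f :: "real^'n \<Rightarrow> real^'m \<Rightarrow> real^'n"
    and P :: "('n, 'm) relu_net"
  assumes "polynomial_map f"
    and "depth P \<ge> 2"
  shows "(\<exists>U. open U \<and> 0 \<in> U \<and>
            bounded ((\<lambda>x. Inf {norm u + lam_norm P l | u l. feasible P x u l}) ` U))
       \<and> (\<forall>V :: real^'n \<Rightarrow> real^'m \<Rightarrow> (nat \<Rightarrow> nat \<Rightarrow> real) \<Rightarrow> real.
            continuous_on (UNIV \<times> UNIV \<times> lam_space P) (\<lambda>(x, u, l). V x u l)
            \<and> (\<forall>x u l x' u' l'.
                  x' = f x u \<and> feasible P x u l \<and> feasible P x' u' l' \<longrightarrow>
                    V x' u' l' - V x u l \<le> - (norm x)\<^sup>2 \<and> V x u l \<ge> 0)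
            \<longrightarrow> glob_asymp_stable (\<lambda>x. f x (psi P x)))"
proof (intro conjI allI impI)
  show "\<exists>U. open U \<and> 0 \<in> U \<and>
          bounded ((\<lambda>x. Inf {norm u + lam_norm P l | u l. feasible P x u l}) ` U)"
    using bounded_inf_lift_cost[OF assms(2)] by (intro exI[of _ "ball 0 1"]) auto
next
  fix V :: "real^'n \<Rightarrow> real^'m \<Rightarrow> (nat \<Rightarrow> nat \<Rightarrow> real) \<Rightarrow> real"
  assume "continuous_on (UNIV \<times> UNIV \<times> lam_space P) (\<lambda>(x, u, l). V x u l)
            \<and> (\<forall>x u l x' u' l'.
                  x' = f x u \<and> feasible P x u l \<and> feasible P x' u' l' \<longrightarrow>
                    V x' u' l' - V x u l \<le> - (norm x)\<^sup>2 \<and> V x u l \<ge> 0)"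
  then show "glob_asymp_stable (\<lambda>x. f x (psi P x))"
    by (intro glob_asymp_stable_if_lifted_lyapunov[OF assms(2)]) auto
qed

end
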